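(* Let $\mathscr J,\mathcal K\subseteq\{1,\dots,n\}$, let $\Delta$ be the simplicial complex with facets $\mathscr J$ and $\mathcal K$, and let $i\in\mathscr J\cap\mathcal K$. Then $$L_{\mathcal K\setminus\{i\}}\cdot L_{\mathscr J}\subseteq P_\Delta R+L_{\mathscr J\setminus\{i\}}.$$
   Context: $\mathbb K$ is a field, $R=\mathbb K[x_{i_1,\dots,i_n}:1\le i_j\le a_j]$. For a tuple $\sigma$ with $\sigma_j\in\{1,\dots,a_j\}\cup\{+\}$, $x_\sigma$ is the sum of all $x_{i_1,\dots,i_n}$ with $i_j=\sigma_j$ whenever $\sigma_j\ne+$. For $\mathscr J\subseteq\{1,\dots,n\}$, $L_{\mathscr J}$ is the ideal of $R$ generated by all $x_\sigma$ with $\sigma_j\in\{1,\dots,a_j\}$ for $j\in\mathscr J$ and $\sigma_j=+$ for $j\notin\mathscr J$ (the entries of the $\mathscr J$-margin of the generic table). $S_\Delta$ is the polynomial ring over $\mathbb K$ in variables $X_\sigma$ for tuples $\sigma$ with $\sigma_j\in\{1,\dots,a_j\}\cup\{\bullet\}$ and $\{j:\sigma_j\ne\bullet\}\in\Delta$. $\tau_\Delta:S_\Delta\to R$ sends $X_\sigma\mapsto x_{\sigma''}$ ($\bullet$ replaced by $+$). $\sigma_\Delta:S_\Delta\to\mathbb K[y_{j,i}:1\le j\le n,1\le i\le a_j]$ sends $X_\sigma\mapsto\prod_jy_{j,\sigma_j}$ with $y_{j,\bullet}$ read as $\sum_iy_{j,i}$; $P_\Delta=\ker\sigma_\Delta$,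 and $P_\Delta R$ is the ideal of $R$ generated by $\tau_\Delta(P_\Delta)$. *)

theory Defs
  imports "HOL-Library.Poly_Mapping"
begin

text \<open>Multivariate polynomials over a coefficient ring with variables of type 'v are
  represented as finitely supported maps from monomials (exponent vectors 'v =>0 nat)
  to coefficients.\<close>

type_synonym ('v, 'k) mpoly = "('v \<Rightarrow>\<^sub>0 nat) \<Rightarrow>\<^sub>0 'k"

definition PVar :: "'v \<Rightarrow> ('v, 'k::comm_ring_1) mpoly" where
  "PVar v = Poly_Mapping.single (Poly_Mapping.single v 1) 1"

definition PConst :: "'k \<Rightarrow> ('v, 'k::comm_ring_1) mpoly" where
  "PConst c = Poly_Mapping.single 0 c"

definition pvars :: "('v, 'k::comm_ring_1) mpoly \<Rightarrow> 'v set" where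
  "pvars p = \<Union> (Poly_Mapping.keys ` Poly_Mapping.keys p)"

definition psubst :: "('v \<Rightarrow> ('w, 'k::comm_ring_1) mpoly) \<Rightarrow> ('v, 'k) mpoly \<Rightarrow> ('w, 'k) mpoly" where
  "psubst f p = (\<Sum>m\<in>Poly_Mapping.keys p.
      PConst (Poly_Mapping.lookup p m) * (\<Prod>v\<in>Poly_Mapping.keys m. f v ^ Poly_Mapping.lookup m v))"

definition ideal_gen :: "'a::comm_ring_1 set \<Rightarrow> 'a set" where
  "ideal_gen S = {(\<Sum>s\<in>F. c s * s) | F c. finite F \<and> F \<subseteq> S}"

definition ideal_sum :: "'a::comm_ring_1 set \<Rightarrow> 'a set \<Rightarrow> 'a set" where
  "ideal_sum I J = ideal_gen (I \<union> J)"

definition ideal_prod :: "'a::comm_ring_1 set \<Rightarrow> 'a set \<Rightarrow> 'a set" where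
  "ideal_prod I J = ideal_gen {x * y | x y. x \<in> I \<and> y \<in> J}"

text \<open>A margin index sigma is a function nat => nat with sigma j in {0..a j} for j in {1..n}
  and sigma j = 0 otherwise; the value 0 encodes the symbol + (resp. bullet).\<close>

definition cells :: "nat \<Rightarrow> (nat \<Rightarrow> nat) \<Rightarrow> (nat \<Rightarrow> nat) set" where
  "cells n a = {c. (\<forall>j\<in>{1..n}. 1 \<le> c j \<and> c j \<le> a j) \<and> (\<forall>j. j \<notin> {1..n} \<longrightarrow> c j = 0)}"

definition margin_idx :: "nat \<Rightarrow> (nat \<Rightarrow> nat) \<Rightarrow> (nat \<Rightarrow> nat) set" where
  "margin_idx n a = {s. (\<forall>j\<in>{1..n}. s j \<le> a j) \<and> (\<forall>j. j \<notin> {1..n} \<longrightarrow> s j = 0)}"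

definition msupp :: "nat \<Rightarrow> (nat \<Rightarrow> nat) \<Rightarrow> nat set" where
  "msupp n s = {j\<in>{1..n}. s j \<noteq> 0}"

definition xsig :: "nat \<Rightarrow> (nat \<Rightarrow> nat) \<Rightarrow> (nat \<Rightarrow> nat) \<Rightarrow> (nat \<Rightarrow> nat, 'k::comm_ring_1) mpoly" where
  "xsig n a s = (\<Sum>c\<in>{c\<in>cells n a. \<forall>j\<in>{1..n}. s j \<noteq> 0 \<longrightarrow> c j = s j}. PVar c)"

definition Lmarg :: "nat \<Rightarrow> (nat \<Rightarrow> nat) \<Rightarrow> nat set \<Rightarrow> (nat \<Rightarrow> nat, 'k::comm_ring_1) mpoly set" where
  "Lmarg n a J = ideal_gen (xsig n a ` {s\<in>margin_idx n a. msupp n s = J \<inter> {1..n} \<and> (\<forall>j\<in>J \<inter> {1..n}. 1 \<le> s j)})"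

definition Svars :: "nat \<Rightarrow> (nat \<Rightarrow> nat) \<Rightarrow> nat set set \<Rightarrow> (nat \<Rightarrow> nat) set" where
  "Svars n a Delta = {s\<in>margin_idx n a. msupp n s \<in> Delta}"

definition tauD :: "nat \<Rightarrow> (nat \<Rightarrow> nat) \<Rightarrow> (nat \<Rightarrow> nat, 'k::comm_ring_1) mpoly \<Rightarrow> (nat \<Rightarrow> nat, 'k) mpoly" where
  "tauD n a = psubst (xsig n a)"

definition yvar :: "(nat \<Rightarrow> nat) \<Rightarrow> nat \<Rightarrow> nat \<Rightarrow> (nat \<times> nat, 'k::comm_ring_1) mpoly" where
  "yvar a j i = (if i = 0 then (\<Sum>i'\<in>{1..a j}. PVar (j, i')) else PVar (j, i))"

definition sigD :: "nat \<Rightarrow> (nat \<Rightarrow> nat) \<Rightarrow> (nat \<Rightarrow> nat, 'k::comm_ring_1) mpoly \<Rightarrow> (nat \<times> nat, 'k) mpoly" where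
  "sigD n a = psubst (\<lambda>s. \<Prod>j\<in>{1..n}. yvar a j (s j))"

definition PDelta :: "nat \<Rightarrow> (nat \<Rightarrow> nat) \<Rightarrow> nat set set \<Rightarrow> (nat \<Rightarrow> nat, 'k::comm_ring_1) mpoly set" where
  "PDelta n a Delta = {p. pvars p \<subseteq> Svars n a Delta \<and> sigD n a p = 0}"

definition PDeltaR :: "nat \<Rightarrow> (nat \<Rightarrow> nat) \<Rightarrow> nat set set \<Rightarrow> (nat \<Rightarrow> nat, 'k::comm_ring_1) mpoly set" where
  "PDeltaR n a Delta = ideal_gen (tauD n a ` PDelta n a Delta)"

definition complex2 :: "nat set \<Rightarrow> nat set \<Rightarrow> nat set set" where
  "complex2 J K = {F. F \<subseteq> J \<or> F \<subseteq> K}"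

end

theory Submission
  imports Defs
begin

text \<open>Take generators x_s of L_(K - {i}) and x_t of L_J, so s_i = + and t_i is not +.
  Moving the i-th entry of t over to s gives s' = s(i := t_i), supported on K, and
  t' = t(i := +), supported on J - {i}; all four indices are variables of S_Delta. The
  monomials X_s X_t and X_s' X_t' have the same image under sigma_Delta, since only the
  order of the factors y_(i,t_i) and y_(i,+) changes. So their difference lies in P_Delta,
  and x_s x_t lies in P_Delta R + x_s' x_t', which is inside P_Delta R + L_(J - {i}).\<close>

definition monom_eval :: "('v \<Rightarrow> ('w, 'k::comm_ring_1) mpoly) \<Rightarrow> ('v \<Rightarrow>\<^sub>0 nat) \<Rightarrow> ('w, 'k) mpoly" where
  "monom_eval f m = (\<Prod>v\<in>Poly_Mapping.keys m. f v ^ Poly_Mapping.lookup m v)"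

lemma monom_eval_superset:
  assumes "finite S" "Poly_Mapping.keys m \<subseteq> S"
  shows "monom_eval f m = (\<Prod>v\<in>S. f v ^ Poly_Mapping.lookup m v)"
  unfolding monom_eval_def
  by (rule prod.mono_neutral_left) (use assms in \<open>auto simp: in_keys_iff\<close>)

lemma monom_eval_add: "monom_eval f (m1 + m2) = monom_eval f m1 * monom_eval f m2"
proof -
  let ?S = "Poly_Mapping.keys m1 \<union> Poly_Mapping.keys m2"
  have "monom_eval f (m1 + m2) = (\<Prod>v\<in>?S. f v ^ Poly_Mapping.lookup (m1 + m2) v)"
    by (rule monom_eval_superset) (auto dest: keys_add[THEN subsetD])
  also have "\<dots> = (\<Prod>v\<in>?S. f v ^ Poly_Mapping.lookup m1 v * f v ^ Poly_Mapping.lookup m2 v)"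
    by (simp add: lookup_add power_add)
  also have "\<dots> = monom_eval f m1 * monom_eval f m2"
    by (simp add: prod.distrib monom_eval_superset[of ?S])
  finally show ?thesis .
qed

lemma monom_eval_single: "monom_eval f (Poly_Mapping.single v 1) = f v"
  by (simp add: monom_eval_def)

lemma psubst_superset:
  assumes "finite S" "Poly_Mapping.keys p \<subseteq> S"
  shows "psubst f p = (\<Sum>m\<in>S. PConst (Poly_Mapping.lookup p m) * monom_eval f m)"
  unfolding psubst_def monom_eval_def[symmetric]
  by (rule sum.mono_neutral_left) (use assms in \<open>auto simp: in_keys_iff PConst_def\<close>)

lemma psubst_diff: "psubst f (p - q) = psubst f p - psubst f q"
proof -
  let ?S = "Poly_Mapping.keys p \<union> Poly_Mapping.keys q"
  have "psubst f (p - q) = (\<Sum>m\<in>?S. PConst (Poly_Mapping.lookup (p - q) m) * monom_eval f m)"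
    by (rule psubst_superset) (auto dest: keys_diff[THEN subsetD])
  also have "\<dots> = (\<Sum>m\<in>?S. PConst (Poly_Mapping.lookup p m) * monom_eval f m
                           - PConst (Poly_Mapping.lookup q m) * monom_eval f m)"
    by (simp add: lookup_minus PConst_def single_diff algebra_simps)
  also have "\<dots> = psubst f p - psubst f q"
    by (simp add: sum_subtractf psubst_superset[of ?S])
  finally show ?thesis .
qed

lemma PVar_mult_PVar:
  "PVar u * PVar v = (Poly_Mapping.single (Poly_Mapping.single u 1 + Poly_Mapping.single v 1) 1
     :: ('v, 'k::comm_ring_1) mpoly)"
  by (simp add: PVar_def mult_single)

lemma psubst_single: "psubst f (Poly_Mapping.single m c) = PConst c * monom_eval f m"
  by (cases "c = 0") (simp_all add: psubst_def monom_eval_def PConst_def)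

lemma psubst_PVar_mult_PVar: "psubst f (PVar u * PVar v) = f u * f v"
  unfolding PVar_mult_PVar psubst_single monom_eval_add monom_eval_single
  by (simp add: PConst_def)

lemma pvars_PVar_mult_PVar: "pvars (PVar u * PVar v :: ('v, 'k::comm_ring_1) mpoly) = {u, v}"
proof -
  have "Poly_Mapping.keys (Poly_Mapping.single u (1::nat) + Poly_Mapping.single v 1) = {u, v}"
    by (auto simp: in_keys_iff lookup_add lookup_single when_def split: if_splits)
  then show ?thesis by (simp add: PVar_mult_PVar pvars_def)
qed

lemma pvars_diff: "pvars (p - q) \<subseteq> pvars p \<union> pvars q"
  unfolding pvars_def using keys_diff[of p q] by auto

lemma ideal_gen_0: "0 \<in> ideal_gen S"
  unfolding ideal_gen_def by (rule CollectI, rule exI[of _ "{}"]) auto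

lemma ideal_gen_base: "x \<in> S \<Longrightarrow> x \<in> ideal_gen S"
  unfolding ideal_gen_def by (rule CollectI, rule exI[of _ "{x}"], rule exI[of _ "\<lambda>_. 1"]) auto

lemma ideal_gen_mult_left: "x \<in> ideal_gen S \<Longrightarrow> c * x \<in> ideal_gen S"
proof -
  assume "x \<in> ideal_gen S"
  then obtain F d where F: "finite F" "F \<subseteq> S" "x = (\<Sum>s\<in>F. d s * s)"
    unfolding ideal_gen_def by auto
  then have "c * x = (\<Sum>s\<in>F. (c * d s) * s)"
    by (simp add: sum_distrib_left mult.assoc)
  with F show ?thesis
    unfolding ideal_gen_def by (auto intro!: exI[of _ F] exI[of _ "\<lambda>s. c * d s"])
qed

lemma ideal_gen_add: "x \<in> ideal_gen S \<Longrightarrow> y \<in> ideal_gen S \<Longrightarrow> x + y \<in> ideal_gen S"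
proof -
  assume "x \<in> ideal_gen S" "y \<in> ideal_gen S"
  then obtain F d G e where F: "finite F" "F \<subseteq> S" "x = (\<Sum>s\<in>F. d s * s)"
    and G: "finite G" "G \<subseteq> S" "y = (\<Sum>s\<in>G. e s * s)"
    unfolding ideal_gen_def by auto
  define c where "c s = (if s \<in> F then d s else 0) + (if s \<in> G then e s else 0)" for s
  have x: "(\<Sum>s\<in>F \<union> G. (if s \<in> F then d s else 0) * s) = x"
    unfolding F(3) by (rule sum.mono_neutral_cong_right) (use F G in auto)
  have y: "(\<Sum>s\<in>F \<union> G. (if s \<in> G then e s else 0) * s) = y"
    unfolding G(3) by (rule sum.mono_neutral_cong_right) (use F G in auto)
  have "x + y = (\<Sum>s\<in>F \<union> G. c s * s)"
    unfolding c_def distrib_right sum.distrib x y ..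
  with F G show ?thesis
    unfolding ideal_gen_def by (auto intro!: exI[of _ "F \<union> G"] exI[of _ c])
qed

lemma ideal_gen_sum:
  "finite F \<Longrightarrow> (\<And>x. x \<in> F \<Longrightarrow> g x \<in> ideal_gen S) \<Longrightarrow> sum g F \<in> ideal_gen S"
  by (induction F rule: finite_induct) (auto intro: ideal_gen_0 ideal_gen_add)

lemma ideal_gen_subset: "S \<subseteq> ideal_gen T \<Longrightarrow> ideal_gen S \<subseteq> ideal_gen T"
  unfolding ideal_gen_def[of S] by (auto intro!: ideal_gen_sum ideal_gen_mult_left)

lemma ideal_prod_ideal_gen_subset:
  assumes "\<And>s t. s \<in> A \<Longrightarrow> t \<in> B \<Longrightarrow> s * t \<in> ideal_gen T"
  shows "ideal_prod (ideal_gen A) (ideal_gen B) \<subseteq> ideal_gen T"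
  unfolding ideal_prod_def
proof (rule ideal_gen_subset, safe)
  fix x y assume "x \<in> ideal_gen A" "y \<in> ideal_gen B"
  then obtain F d G e where F: "finite F" "F \<subseteq> A" "x = (\<Sum>s\<in>F. d s * s)"
    and G: "finite G" "G \<subseteq> B" "y = (\<Sum>t\<in>G. e t * t)"
    unfolding ideal_gen_def by auto
  have "x * y = (\<Sum>s\<in>F. \<Sum>t\<in>G. (d s * e t) * (s * t))"
    unfolding F(3) G(3) sum_product by (simp only: mult_ac)
  also have "\<dots> \<in> ideal_gen T"
    by (intro ideal_gen_sum ideal_gen_mult_left assms) (use F G in auto)
  finally show "x * y \<in> ideal_gen T" .
qed

lemma ideal_sum_add_mem: "x \<in> I \<Longrightarrow> y \<in> J \<Longrightarrow> x + y \<in> ideal_sum I J"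
  unfolding ideal_sum_def by (simp add: ideal_gen_add ideal_gen_base)

definition Lmarg_idx :: "nat \<Rightarrow> (nat \<Rightarrow> nat) \<Rightarrow> nat set \<Rightarrow> (nat \<Rightarrow> nat) set" where
  "Lmarg_idx n a J = {s\<in>margin_idx n a. msupp n s = J \<inter> {1..n} \<and> (\<forall>j\<in>J \<inter> {1..n}. 1 \<le> s j)}"

lemma Lmarg_eq_ideal_gen: "Lmarg n a J = ideal_gen (xsig n a ` Lmarg_idx n a J)"
  unfolding Lmarg_def Lmarg_idx_def ..

lemma Lmarg_idx_nonzero_iff:
  assumes "s \<in> Lmarg_idx n a J"
  shows "s j \<noteq> 0 \<longleftrightarrow> j \<in> J \<inter> {1..n}"
  using assms unfolding Lmarg_idx_def margin_idx_def msupp_def by auto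

lemma Lmarg_idx_entry_bounds:
  assumes "s \<in> Lmarg_idx n a J" "j \<in> J \<inter> {1..n}"
  shows "1 \<le> s j" "s j \<le> a j"
  using assms unfolding Lmarg_idx_def margin_idx_def by auto

lemma Lmarg_idx_update_insert:
  assumes "s \<in> Lmarg_idx n a J" "i \<in> {1..n}" "1 \<le> v" "v \<le> a i"
  shows "s(i := v) \<in> Lmarg_idx n a (insert i J)"
  using assms unfolding Lmarg_idx_def margin_idx_def msupp_def by auto

lemma Lmarg_idx_update_remove:
  assumes "s \<in> Lmarg_idx n a J"
  shows "s(i := 0) \<in> Lmarg_idx n a (J - {i})"
  using assms unfolding Lmarg_idx_def margin_idx_def msupp_def by auto

lemma Lmarg_idx_subset_Svars:
  assumes "J \<in> Delta" "\<And>F. F \<in> Delta \<Longrightarrow> F \<inter> {1..n} \<in> Delta"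
  shows "Lmarg_idx n a J \<subseteq> Svars n a Delta"
  using assms unfolding Lmarg_idx_def Svars_def by auto

lemma sigD_exchange_binomial:
  "sigD n a (PVar s * PVar t - PVar (s(i := t i)) * PVar (t(i := s i))
     :: (nat \<Rightarrow> nat, 'k::comm_ring_1) mpoly) = 0"
proof -
  let ?y = "\<lambda>s j. yvar a j (s j) :: (nat \<times> nat, 'k) mpoly"
  let ?s' = "s(i := t i)" and ?t' = "t(i := s i)"
  have "sigD n a (PVar s * PVar t - PVar ?s' * PVar ?t' :: (nat \<Rightarrow> nat, 'k) mpoly)
      = (\<Prod>j\<in>{1..n}. ?y s j) * (\<Prod>j\<in>{1..n}. ?y t j)
        - (\<Prod>j\<in>{1..n}. ?y ?s' j) * (\<Prod>j\<in>{1..n}. ?y ?t' j)"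
    unfolding sigD_def psubst_diff psubst_PVar_mult_PVar ..
  moreover have "(\<Prod>j\<in>{1..n}. ?y ?s' j * ?y ?t' j) = (\<Prod>j\<in>{1..n}. ?y s j * ?y t j)"
    by (rule prod.cong) (auto simp: mult.commute)
  ultimately show ?thesis
    by (simp only: prod.distrib diff_self)
qed

lemma exchange_binomial_in_PDelta:
  assumes "s \<in> Svars n a Delta" "t \<in> Svars n a Delta"
    and "s(i := t i) \<in> Svars n a Delta" "t(i := s i) \<in> Svars n a Delta"
  shows "PVar s * PVar t - PVar (s(i := t i)) * PVar (t(i := s i))
           \<in> (PDelta n a Delta :: (nat \<Rightarrow> nat, 'k::comm_ring_1) mpoly set)"
  using assms pvars_diff[of "PVar s * PVar t :: (nat \<Rightarrow> nat, 'k) mpoly"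
      "PVar (s(i := t i)) * PVar (t(i := s i))"]
  unfolding PDelta_def by (auto simp: pvars_PVar_mult_PVar sigD_exchange_binomial)

lemma xsig_exchange_in_PDeltaR:
  assumes "s \<in> Svars n a Delta" "t \<in> Svars n a Delta"
    and "s(i := t i) \<in> Svars n a Delta" "t(i := s i) \<in> Svars n a Delta"
  shows "xsig n a s * xsig n a t - xsig n a (s(i := t i)) * xsig n a (t(i := s i))
           \<in> (PDeltaR n a Delta :: (nat \<Rightarrow> nat, 'k::comm_ring_1) mpoly set)"
proof -
  have "xsig n a s * xsig n a t - xsig n a (s(i := t i)) * xsig n a (t(i := s i))
      = tauD n a (PVar s * PVar t - PVar (s(i := t i)) * PVar (t(i := s i))
          :: (nat \<Rightarrow> nat, 'k) mpoly)"
    unfolding tauD_def psubst_diff psubst_PVar_mult_PVar ..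
  then show ?thesis
    unfolding PDeltaR_def
    by (simp add: ideal_gen_base exchange_binomial_in_PDelta[OF assms])
qed

lemma xsig_mult_mem_PDeltaR_Lmarg:
  assumes "i \<in> {1..n}" "i \<in> J" "i \<in> K"
    and s: "s \<in> Lmarg_idx n a (K - {i})" and t: "t \<in> Lmarg_idx n a J"
  shows "xsig n a s * xsig n a t
           \<in> ideal_sum (PDeltaR n a (complex2 J K) :: (nat \<Rightarrow> nat, 'k::comm_ring_1) mpoly set)
                (Lmarg n a (J - {i}))"
proof -
  let ?s' = "s(i := t i)" and ?t' = "t(i := s i)"
  have "s i = 0"
    using Lmarg_idx_nonzero_iff[OF s] by blast
  have s': "?s' \<in> Lmarg_idx n a K"
    using Lmarg_idx_update_insert[OF s \<open>i \<in> {1..n}\<close> Lmarg_idx_entry_bounds[OF t]] assms(1-3)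
    by (simp add: insert_absorb)
  have t': "?t' \<in> Lmarg_idx n a (J - {i})"
    using Lmarg_idx_update_remove[OF t] \<open>s i = 0\<close> by simp
  have "Lmarg_idx n a F \<subseteq> Svars n a (complex2 J K)" if "F \<subseteq> J \<or> F \<subseteq> K" for F
    by (rule Lmarg_idx_subset_Svars) (use that in \<open>auto simp: complex2_def\<close>)
  then have "s \<in> Svars n a (complex2 J K)" "t \<in> Svars n a (complex2 J K)"
    "?s' \<in> Svars n a (complex2 J K)" "?t' \<in> Svars n a (complex2 J K)"
    using s t s' t' by blast+
  then have binomial: "xsig n a s * xsig n a t - xsig n a ?s' * xsig n a ?t'
      \<in> (PDeltaR n a (complex2 J K) :: (nat \<Rightarrow> nat, 'k) mpoly set)"
    by (rule xsig_exchange_in_PDeltaR)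
  have "xsig n a ?s' * xsig n a ?t' \<in> (Lmarg n a (J - {i}) :: (nat \<Rightarrow> nat, 'k) mpoly set)"
    unfolding Lmarg_eq_ideal_gen using t' by (intro ideal_gen_mult_left ideal_gen_base) simp
  with binomial
  have "(xsig n a s * xsig n a t - xsig n a ?s' * xsig n a ?t') + xsig n a ?s' * xsig n a ?t'
      \<in> ideal_sum (PDeltaR n a (complex2 J K) :: (nat \<Rightarrow> nat, 'k) mpoly set)
           (Lmarg n a (J - {i}))"
    by (rule ideal_sum_add_mem)
  then show ?thesis by simp
qed

theorem lemma6p4:
  fixes n :: nat and a :: "nat \<Rightarrow> nat" and J K :: "nat set" and i :: nat
  assumes "J \<subseteq> {1..n}" and "K \<subseteq> {1..n}" and "i \<in> J \<inter> K"
  shows "ideal_prod (Lmarg n a (K - {i})) (Lmarg n a J)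
    \<subseteq> ideal_sum (PDeltaR n a (complex2 J K) :: (nat \<Rightarrow> nat, 'k::field) mpoly set)
                 (Lmarg n a (J - {i}))"
proof -
  have i: "i \<in> {1..n}" "i \<in> J" "i \<in> K"
    using assms by auto
  have "xsig n a s * xsig n a t
      \<in> ideal_gen (PDeltaR n a (complex2 J K) \<union> (Lmarg n a (J - {i}) :: (nat \<Rightarrow> nat, 'k) mpoly set))"
    if "s \<in> Lmarg_idx n a (K - {i})" "t \<in> Lmarg_idx n a J" for s t
    using xsig_mult_mem_PDeltaR_Lmarg[OF i that] unfolding ideal_sum_def .
  then show ?thesis
    unfolding Lmarg_eq_ideal_gen[of n a "K - {i}"] Lmarg_eq_ideal_gen[of n a J]
      ideal_sum_def[of "PDeltaR n a (complex2 J K)"]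
    by (intro ideal_prod_ideal_gen_subset) auto
qed

end
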